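(* For any $a,b\in M^*$, the intersection $S_a\cap S_b^{\varphi}$ contains at most one point, where $S_b^{\varphi}=\{F(c^qb^q+ci): c\in M^*\}$.
   Context: Let $q$ be a prime power, $n>1$ an integer, $F=\mathbb F_q\subset M=\mathbb F_{q^n}\subset L=\mathbb F_{q^{2n}}$. Regard $L$ as a $2n$-dimensional $F$-vector space; $\mathrm{PG}(2n-1,q)$ has as points the subspaces $Fz$, $z\in L^*$. Fix $i\in L\setminus M$, so every $z\in L$ is uniquely $z=a+ib$ with $a,b\in M$. For $a\in M$ let $S_a=\{F c(a+i): c\in M^*\}$. Let $\hat\varphi:L\to L$ be the $F$-linear bijection $\hat\varphi(a+ib)=a^q+ib$ ($a,b\in M$) and $\varphi$ the induced projectivity of $\mathrm{PG}(2n-1,q)$; $S_b^\varphi$ denotes the image of $S_b$ under $\varphi$. *)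

theory Defs
  imports "HOL-Computational_Algebra.Primes" "HOL-Library.Cardinality"
begin

text \<open>L is modelled as a finite field type of cardinality q^(2n).
  The subfield F = GF(q) is the fixed field of x \<mapsto> x^q,
  the subfield M = GF(q^n) is the fixed field of x \<mapsto> x^(q^n).\<close>

definition subF :: "nat \<Rightarrow> 'a::field set" where
  "subF q = {x. x ^ q = x}"

definition subM :: "nat \<Rightarrow> nat \<Rightarrow> 'a::field set" where
  "subM q n = {x. x ^ (q ^ n) = x}"

text \<open>The projective point F z (the 1-dimensional F-subspace spanned by z).\<close>
definition pt :: "'a::field set \<Rightarrow> 'a \<Rightarrow> 'a set" where
  "pt F z = (\<lambda>f. f * z) ` F"

definition Sset :: "'a::field set \<Rightarrow> 'a set \<Rightarrow> 'a \<Rightarrow> 'a \<Rightarrow> 'a set set" where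
  "Sset F M i a = {pt F (c * (a + i)) | c. c \<in> M \<and> c \<noteq> 0}"

definition phihat :: "nat \<Rightarrow> 'a::field set \<Rightarrow> 'a \<Rightarrow> 'a \<Rightarrow> 'a" where
  "phihat q M i z =
     (case (THE (a, b). a \<in> M \<and> b \<in> M \<and> z = a + i * b) of (a, b) \<Rightarrow> a ^ q + i * b)"

definition phi :: "nat \<Rightarrow> 'a::field set \<Rightarrow> 'a \<Rightarrow> 'a set \<Rightarrow> 'a set" where
  "phi q M i P = phihat q M i ` P"

end

theory Submission
  imports Defs "HOL-Number_Theory.Residues"
begin

text \<open>Write points of \<open>L\<close> as \<open>u + i v\<close> with \<open>u, v \<in> M\<close>. The map \<open>\<hat>\<phi>\<close> fixes \<open>i\<close>, so it sends
  the point \<open>F c(b + i)\<close> of \<open>S\<^sub>b\<close> to \<open>F(c\<^sup>q b\<^sup>q + c i)\<close>. Comparing \<open>M\<close>-coordinates, this point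
  lies in \<open>S\<^sub>a\<close> iff it equals \<open>F c(a + i)\<close> with \<open>c a = c\<^sup>q b\<^sup>q\<close>. Two nonzero solutions \<open>c, c'\<close>
  of this equation have a quotient \<open>r = c'/c\<close> with \<open>r\<^sup>q = r\<close>, i.e. \<open>r \<in> F\<^sup>*\<close>, so they
  span the same projective point.\<close>

lemma CHAR_eq_prime_of_card:
  fixes p :: nat
  assumes "prime p" "CARD('a::{field,finite}) = p ^ m"
  shows "CHAR('a) = p"
proof -
  have prime_char: "prime CHAR('a)"
    by (rule prime_CHAR_semidom) (rule finite_imp_CHAR_pos, simp)
  have "CHAR('a) dvd p ^ m" using CHAR_dvd_CARD[where 'a='a] assms(2) by simp
  hence "CHAR('a) dvd p" using prime_char prime_dvd_power by blast
  thus ?thesis using prime_char assms(1) primes_dvd_imp_eq by blast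
qed

lemma power_power_fixed:
  fixes x :: "'a::monoid_mult"
  assumes "x ^ q = x"
  shows "x ^ (q ^ n) = x"
proof (induction n)
  case (Suc n)
  have "x ^ (q ^ Suc n) = (x ^ q) ^ (q ^ n)" by (simp add: power_mult mult.commute)
  thus ?case using assms Suc by simp
qed simp

lemma subF_subset_subM: "subF q \<subseteq> (subM q n :: 'a::field set)"
  unfolding subF_def subM_def using power_power_fixed by blast

lemma pt_mult_subF:
  fixes r z :: "'a::field"
  assumes "r \<in> subF q" "r \<noteq> 0"
  shows "pt (subF q) (r * z) = pt (subF q) z"
proof -
  have closed: "f * r \<in> subF q" "f / r \<in> subF q" if "f \<in> subF q" for f
    using that assms unfolding subF_def by (simp_all add: power_mult_distrib power_divide)
  show ?thesis
  proof
    show "pt (subF q) (r * z) \<subseteq> pt (subF q) z"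
    proof
      fix w assume "w \<in> pt (subF q) (r * z)"
      then obtain f where "f \<in> subF q" "w = (f * r) * z" unfolding pt_def by auto
      thus "w \<in> pt (subF q) z" unfolding pt_def using closed by blast
    qed
    show "pt (subF q) z \<subseteq> pt (subF q) (r * z)"
    proof
      fix w assume "w \<in> pt (subF q) z"
      then obtain f where "f \<in> subF q" "w = f * z" unfolding pt_def by auto
      moreover have "w = (f / r) * (r * z)" using \<open>w = f * z\<close> assms by simp
      ultimately show "w \<in> pt (subF q) (r * z)" unfolding pt_def using closed by blast
    qed
  qed
qed

locale subfield_tower =
  fixes q n k :: nat and i :: "'a::{field,finite}"
  assumes prime_CHAR: "prime CHAR('a)"
    and q_CHAR_power: "q = CHAR('a) ^ k"
    and i_notin_subM: "i \<notin> subM q n"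
begin

abbreviation "F \<equiv> subF q :: 'a set"
abbreviation "M \<equiv> subM q n :: 'a set"

lemma subM_iff: "x \<in> M \<longleftrightarrow> x ^ CHAR('a) ^ (k * n) = x"
  unfolding subM_def q_CHAR_power by (simp add: power_mult)

lemma subM_diff: "x \<in> M \<Longrightarrow> y \<in> M \<Longrightarrow> x - y \<in> M"
proof -
  assume xy: "x \<in> M" "y \<in> M"
  have "x ^ CHAR('a) ^ (k * n) = (x - y) ^ CHAR('a) ^ (k * n) + y ^ CHAR('a) ^ (k * n)"
    using freshmans_dream'[OF prime_CHAR refl, of "x - y" y] by simp
  hence "(x - y) ^ CHAR('a) ^ (k * n) = x - y" using xy unfolding subM_iff by (simp add: eq_diff_eq)
  thus "x - y \<in> M" unfolding subM_iff .
qed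

lemma subM_mult: "x \<in> M \<Longrightarrow> y \<in> M \<Longrightarrow> x * y \<in> M"
  unfolding subM_def by (simp add: power_mult_distrib)

lemma subM_divide: "x \<in> M \<Longrightarrow> y \<in> M \<Longrightarrow> x / y \<in> M"
  unfolding subM_def by (simp add: power_divide)

lemma subM_power_q: "x \<in> M \<Longrightarrow> x ^ q \<in> M"
proof -
  assume "x \<in> M"
  have "(x ^ q) ^ (q ^ n) = (x ^ (q ^ n)) ^ q" by (simp flip: power_mult add: mult.commute)
  also have "\<dots> = x ^ q" using \<open>x \<in> M\<close> unfolding subM_def by simp
  finally show "x ^ q \<in> M" unfolding subM_def by simp
qed

lemma subM_coordinates_unique:
  assumes "u \<in> M" "u' \<in> M" "v \<in> M" "v' \<in> M" "u + i * v = u' + i * v'"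
  shows "u = u' \<and> v = v'"
proof (cases "v = v'")
  case False
  have "i = (u' - u) / (v - v')"
    using assms(5) False by (simp add: field_simps)
  hence "i \<in> M" using assms(1-4) subM_diff subM_divide by simp
  thus ?thesis using i_notin_subM by simp
qed (use assms in simp)

lemma phihat_coordinates:
  assumes "u \<in> M" "v \<in> M"
  shows "phihat q M i (u + i * v) = u ^ q + i * v"
proof -
  have "(THE (u', v'). u' \<in> M \<and> v' \<in> M \<and> u + i * v = u' + i * v') = (u, v)"
    by (rule the_equality) (use assms subM_coordinates_unique in auto)
  thus ?thesis unfolding phihat_def by simp
qed

lemma phi_pt:
  assumes "b \<in> M" "c \<in> M"
  shows "phi q M i (pt F (c * (b + i))) = pt F (c ^ q * b ^ q + c * i)"
proof -
  have "phihat q M i (f * (c * (b + i))) = f * (c ^ q * b ^ q + c * i)" if "f \<in> F" for f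
  proof -
    have "f * c * b \<in> M" "f * c \<in> M"
      using that assms subF_subset_subM subM_mult by blast+
    hence "phihat q M i (f * c * b + i * (f * c)) = (f * c * b) ^ q + i * (f * c)"
      by (rule phihat_coordinates)
    moreover have "f ^ q = f" using that unfolding subF_def by simp
    ultimately show ?thesis by (simp add: power_mult_distrib algebra_simps)
  qed
  thus ?thesis unfolding phi_def pt_def by (auto simp: image_image intro!: image_cong)
qed

lemma phi_Sset:
  assumes "b \<in> M"
  shows "phi q M i ` Sset F M i b = {pt F (c ^ q * b ^ q + c * i) | c. c \<in> M \<and> c \<noteq> 0}"
  unfolding Sset_def using phi_pt[OF assms] by blast

lemma Sset_inter_phi_Sset_point:
  assumes "a \<in> M" "b \<in> M" "P \<in> Sset F M i a \<inter> phi q M i ` Sset F M i b"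
  obtains c where "c \<noteq> 0" "c * a = c ^ q * b ^ q" "P = pt F (c * (a + i))"
proof -
  obtain c where c: "c \<in> M" "P = pt F (c * (a + i))"
    using assms(3) unfolding Sset_def by blast
  obtain d where d: "d \<in> M" "d \<noteq> 0" "P = pt F (d ^ q * b ^ q + d * i)"
    using assms(2,3) phi_Sset by auto
  have "1 \<in> F" unfolding subF_def by simp
  hence "d ^ q * b ^ q + d * i \<in> P" unfolding d(3) pt_def by force
  then obtain f where "f \<in> F" "d ^ q * b ^ q + d * i = f * (c * (a + i))"
    unfolding c(2) pt_def by auto
  then have f: "f \<in> F" "d ^ q * b ^ q + i * d = f * c * a + i * (f * c)"
    by (simp_all add: algebra_simps)
  have "d ^ q * b ^ q \<in> M" using d(1) assms(2) subM_mult subM_power_q by simp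
  moreover have "f * c * a \<in> M" "f * c \<in> M"
    using f(1) c(1) assms(1) subF_subset_subM subM_mult by blast+
  ultimately have "d ^ q * b ^ q = f * c * a \<and> d = f * c"
    using subM_coordinates_unique d(1) f(2) by blast
  hence "d * a = d ^ q * b ^ q" "P = pt F (d * (a + i))"
    using d(3) by (auto simp: algebra_simps)
  with d(2) show thesis by (rule that)
qed

lemma pt_eq_of_same_equation:
  assumes "b \<noteq> 0" "c \<noteq> 0" "c' \<noteq> 0" "c * a = c ^ q * b ^ q" "c' * a = c' ^ q * b ^ q"
  shows "pt F (c' * (a + i)) = pt F (c * (a + i))"
proof (cases "a = 0")
  case True
  thus ?thesis using assms by simp
next
  case False
  define r where "r = c' / c"
  have "b ^ q \<noteq> 0" using assms(1) by simp
  hence "c ^ q = c * a / b ^ q" "c' ^ q = c' * a / b ^ q"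
    using assms(4,5) by (simp_all add: eq_divide_eq)
  hence "r ^ q = (c' * a / b ^ q) / (c * a / b ^ q)"
    unfolding r_def by (simp add: power_divide)
  also have "\<dots> = r" unfolding r_def using False \<open>b ^ q \<noteq> 0\<close> by simp
  finally have "r \<in> F" unfolding subF_def by simp
  moreover have "r \<noteq> 0" "c' * (a + i) = r * (c * (a + i))"
    unfolding r_def using assms by simp_all
  ultimately show ?thesis using pt_mult_subF by metis
qed

lemma card_Sset_inter_phi_Sset_le_1:
  assumes "a \<in> M" "b \<in> M" "b \<noteq> 0"
  shows "card (Sset F M i a \<inter> phi q M i ` Sset F M i b) \<le> 1"
proof -
  have "P = P'" if P: "P \<in> Sset F M i a \<inter> phi q M i ` Sset F M i b"
    and P': "P' \<in> Sset F M i a \<inter> phi q M i ` Sset F M i b" for P P'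
  proof -
    obtain c where c: "c \<noteq> 0" "c * a = c ^ q * b ^ q" "P = pt F (c * (a + i))"
      using Sset_inter_phi_Sset_point[OF assms(1,2) P] .
    obtain c' where c': "c' \<noteq> 0" "c' * a = c' ^ q * b ^ q" "P' = pt F (c' * (a + i))"
      using Sset_inter_phi_Sset_point[OF assms(1,2) P'] .
    have "pt F (c' * (a + i)) = pt F (c * (a + i))"
      using pt_eq_of_same_equation[OF assms(3) c(1) c'(1) c(2) c'(2)] .
    thus "P = P'" using c(3) c'(3) by simp
  qed
  thus ?thesis by (simp add: card_le_Suc0_iff_eq)
qed

end

theorem mainTheorem9:
  fixes q n :: nat and i a b :: "'a::{field,finite}"
  assumes "\<exists>p k. prime (p::nat) \<and> k > 0 \<and> q = p ^ k"
    and "n > 1"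
    and "CARD('a) = q ^ (2 * n)"
    and "i \<notin> subM q n"
    and "a \<in> subM q n" and "a \<noteq> 0"
    and "b \<in> subM q n" and "b \<noteq> 0"
  shows "card (Sset (subF q) (subM q n) i a
               \<inter> phi q (subM q n) i ` Sset (subF q) (subM q n) i b) \<le> 1"
proof -
  obtain p k where pk: "prime p" "q = p ^ k" using assms(1) by blast
  have "CARD('a) = p ^ (k * (2 * n))" using assms(3) pk by (simp add: power_mult)
  hence "CHAR('a) = p" by (rule CHAR_eq_prime_of_card[OF pk(1)])
  hence "subfield_tower q n k i"
    using pk assms(4) by unfold_locales simp_all
  thus ?thesis using assms(5,7,8) by (rule subfield_tower.card_Sset_inter_phi_Sset_le_1)
qed

end
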